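(* Let $X$ be a real $n\times p$ matrix ($p<n$) of full column rank with rows $x_1^\top,\dots,x_n^\top$, let $f\in\mathbb{R}^p$ and let $k\in\{1,\dots,n\}$. Then the following are equivalent: (a) for every $e\in\mathbb{R}^n$ with $\|e\|_0\leq k$, $f$ is the unique solution of $\min_{g\in\mathbb{R}^p}\|Xf+e-Xg\|_1$; (b) $k\leq m(X)$.
   Context: $N=\{1,\dots,n\}$; $\|e\|_0$ is the number of nonzero components of $e$. For $k\in\{1,\dots,n\}$, the leverage constants of $X$ are $$c_k(X)=\min_{M\subset N,\ |M|=k}\ \min_{g\in\mathbb{R}^p,\ g\neq 0}\ \frac{\sum_{i\in N\setminus M}|x_i^\top g|}{\sum_{i\in N}|x_i^\top g|},$$ and $m(X)=\max\{k\in N : c_k(X)>1/2\}$. *)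

theory Defs
  imports "HOL-Analysis.Analysis"
begin

definition l0norm :: "real^'n \<Rightarrow> nat" where
  "l0norm e = card {i. e $ i \<noteq> 0}"

definition l1norm :: "real^'n \<Rightarrow> real" where
  "l1norm v = (\<Sum>i\<in>UNIV. \<bar>v $ i\<bar>)"

text \<open>Leverage constant c_k(X); the rows of X are X $ i, the index set N is UNIV.\<close>
definition leverage_const :: "real^'p^'n \<Rightarrow> nat \<Rightarrow> real" where
  "leverage_const X k =
     Min ((\<lambda>M. INF g \<in> {g :: real^'p. g \<noteq> 0}.
              (\<Sum>i\<in>UNIV - M. \<bar>(X $ i) \<bullet> g\<bar>) / (\<Sum>i\<in>UNIV. \<bar>(X $ i) \<bullet> g\<bar>))
          ` {M. card M = k})"

text \<open>m(X) = max{k in N : c_k(X) > 1/2}, with the convention max of the empty set = 0.\<close>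
definition mX :: "real^'p^'n \<Rightarrow> nat" where
  "mX X = (let S = {k. 1 \<le> k \<and> k \<le> CARD('n) \<and> leverage_const X k > 1/2}
           in if S = {} then 0 else Max S)"

end

theory Submission
  imports Defs
begin

text \<open>
  The vector f is the unique l1 fit for every k-sparse error e if and only if, for every
  nonzero d, the vector \<open>X *v d\<close> carries strictly less l1 mass on any k coordinates than
  off them: sufficiency is the triangle inequality on a k-set containing the support of e,
  necessity follows by taking for e the restriction of \<open>X *v d\<close> to k coordinates.
  For X of full column rank the infimum in the definition of c_k(X) is a minimum of a
  continuous scale-invariant function over the unit sphere, so this mass condition is
  exactly c_k(X) > 1/2. Being inherited by smaller k, it holds precisely for k \<le> m(X).
\<close>

definition l1_minimizers :: "real^'p^'n \<Rightarrow> real^'n \<Rightarrow> (real^'p) set" where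
  "l1_minimizers X y = {g. \<forall>h. l1norm (y - X *v g) \<le> l1norm (y - X *v h)}"

text \<open>The analogue, for the range of X, of the null space property of compressed sensing;
  it is the division-free form of c_k(X) > 1/2.\<close>
definition range_space_property :: "real^'p^'n \<Rightarrow> nat \<Rightarrow> bool" where
  "range_space_property X k \<longleftrightarrow> (\<forall>M g. card M = k \<longrightarrow> g \<noteq> 0 \<longrightarrow>
     (\<Sum>i\<in>M. \<bar>(X *v g) $ i\<bar>) < (\<Sum>i\<in>UNIV - M. \<bar>(X *v g) $ i\<bar>))"

lemma l1norm_split:
  fixes v :: "real^'n"
  shows "l1norm v = (\<Sum>i\<in>M. \<bar>v $ i\<bar>) + (\<Sum>i\<in>UNIV - M. \<bar>v $ i\<bar>)"
  unfolding l1norm_def using sum.subset_diff[of M UNIV "\<lambda>i. \<bar>v $ i\<bar>"] by simp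

lemma l1norm_pos:
  fixes v :: "real^'n"
  assumes "v \<noteq> 0"
  shows "l1norm v > 0"
proof -
  obtain i where "v $ i \<noteq> 0" using assms by (metis vec_eq_iff zero_index)
  moreover have "\<bar>v $ i\<bar> \<le> l1norm v"
    unfolding l1norm_def by (rule member_le_sum) auto
  ultimately show ?thesis by linarith
qed

lemma l1norm_lt_add_if_mass_outside_support:
  fixes e v :: "real^'n"
  assumes "{i. e $ i \<noteq> 0} \<subseteq> M"
    and "(\<Sum>i\<in>M. \<bar>v $ i\<bar>) < (\<Sum>i\<in>UNIV - M. \<bar>v $ i\<bar>)"
  shows "l1norm e < l1norm (e + v)"
proof -
  have outside: "e $ i = 0" if "i \<in> UNIV - M" for i using assms(1) that by auto
  have "l1norm e = (\<Sum>i\<in>M. \<bar>e $ i\<bar>)"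
    using l1norm_split[of e M] outside by simp
  also have "\<dots> \<le> (\<Sum>i\<in>M. \<bar>e $ i + v $ i\<bar> + \<bar>v $ i\<bar>)"
    by (rule sum_mono) linarith
  also have "\<dots> < (\<Sum>i\<in>M. \<bar>e $ i + v $ i\<bar>) + (\<Sum>i\<in>UNIV - M. \<bar>e $ i + v $ i\<bar>)"
    using assms(2) outside by (simp add: sum.distrib)
  also have "\<dots> = l1norm (e + v)"
    using l1norm_split[of "e + v" M] by simp
  finally show ?thesis .
qed

lemma range_space_property_card_le:
  fixes X :: "real^'p^'n"
  assumes "range_space_property X k" "k \<le> CARD('n)" "card M \<le> k" "g \<noteq> 0"
  shows "(\<Sum>i\<in>M. \<bar>(X *v g) $ i\<bar>) < (\<Sum>i\<in>UNIV - M. \<bar>(X *v g) $ i\<bar>)"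
proof -
  obtain M' where M': "M \<subseteq> M'" "card M' = k"
    using exists_subset_between[of M k UNIV] assms(2,3) by auto
  have "(\<Sum>i\<in>M. \<bar>(X *v g) $ i\<bar>) \<le> (\<Sum>i\<in>M'. \<bar>(X *v g) $ i\<bar>)"
    using M'(1) by (intro sum_mono2) auto
  also have "\<dots> < (\<Sum>i\<in>UNIV - M'. \<bar>(X *v g) $ i\<bar>)"
    using assms(1,4) M'(2) unfolding range_space_property_def by blast
  also have "\<dots> \<le> (\<Sum>i\<in>UNIV - M. \<bar>(X *v g) $ i\<bar>)"
    using M'(1) by (intro sum_mono2) auto
  finally show ?thesis .
qed

lemma range_space_property_mono:
  fixes X :: "real^'p^'n"
  assumes "range_space_property X j" "k \<le> j" "j \<le> CARD('n)"
  shows "range_space_property X k"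
  unfolding range_space_property_def
  using range_space_property_card_le[OF assms(1,3)] assms(2) by auto

lemma residual_eq:
  fixes X :: "real^'p^'n"
  shows "X *v f + e - X *v g = e + X *v (f - g)"
  by (simp add: matrix_vector_mult_diff_distrib algebra_simps)

lemma l1_minimizers_eq_if_range_space_property:
  fixes X :: "real^'p^'n" and e :: "real^'n"
  assumes "range_space_property X k" "k \<le> CARD('n)" "l0norm e \<le> k"
  shows "l1_minimizers X (X *v f + e) = {f}"
proof -
  have strict: "l1norm e < l1norm (X *v f + e - X *v g)" if "g \<noteq> f" for g
  proof -
    have "card {i. e $ i \<noteq> 0} \<le> k" using assms(3) unfolding l0norm_def .
    moreover have "f - g \<noteq> 0" using that by simp
    ultimately have "l1norm e < l1norm (e + X *v (f - g))"
      by (intro l1norm_lt_add_if_mass_outside_support[OF subset_refl]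
          range_space_property_card_le[OF assms(1,2)])
    then show ?thesis by (simp only: residual_eq)
  qed
  have fit_f: "X *v f + e - X *v f = e" by simp
  show ?thesis
  proof (intro set_eqI iffI)
    fix g assume "g \<in> l1_minimizers X (X *v f + e)"
    then have "l1norm (X *v f + e - X *v g) \<le> l1norm (X *v f + e - X *v f)"
      unfolding l1_minimizers_def by blast
    then show "g \<in> {f}" using strict[of g] unfolding fit_f by fastforce
  next
    fix g assume "g \<in> {f}"
    have "l1norm e \<le> l1norm (X *v f + e - X *v h)" for h
      using strict[of h] fit_f by (metis order.refl less_imp_le)
    then show "g \<in> l1_minimizers X (X *v f + e)"
      using \<open>g \<in> {f}\<close> unfolding l1_minimizers_def fit_f by simp
  qed
qed

lemma range_space_property_if_l1_minimizers_eq: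
  fixes X :: "real^'p^'n"
  assumes "\<forall>e :: real^'n. l0norm e \<le> k \<longrightarrow> l1_minimizers X (X *v f + e) = {f}"
  shows "range_space_property X k"
  unfolding range_space_property_def
proof (intro allI impI)
  fix M :: "'n set" and g :: "real^'p"
  assume M: "card M = k" and "g \<noteq> 0"
  define v where "v = X *v g"
  define e :: "real^'n" where "e = (\<chi> i. if i \<in> M then v $ i else 0)"
  have "{i. e $ i \<noteq> 0} \<subseteq> M" unfolding e_def by auto
  then have "l0norm e \<le> k" unfolding l0norm_def using M by (metis card_mono finite)
  then have minimizers: "l1_minimizers X (X *v f + e) = {f}" using assms by blast
  have "f + g \<notin> l1_minimizers X (X *v f + e)" using minimizers \<open>g \<noteq> 0\<close> by auto
  then obtain h where "l1norm (X *v f + e - X *v h) < l1norm (X *v f + e - X *v (f + g))"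
    unfolding l1_minimizers_def by (auto simp: not_le)
  moreover have "l1norm (X *v f + e - X *v f) \<le> l1norm (X *v f + e - X *v h)"
    using minimizers unfolding l1_minimizers_def by blast
  moreover have "X *v f + e - X *v (f + g) = e - v"
    unfolding v_def by (simp add: matrix_vector_right_distrib)
  ultimately have "l1norm e < l1norm (e - v)" by simp
  moreover have "l1norm e = (\<Sum>i\<in>M. \<bar>v $ i\<bar>)"
    using l1norm_split[of e M] unfolding e_def by simp
  moreover have "l1norm (e - v) = (\<Sum>i\<in>UNIV - M. \<bar>v $ i\<bar>)"
    using l1norm_split[of "e - v" M] unfolding e_def by simp
  ultimately show "(\<Sum>i\<in>M. \<bar>(X *v g) $ i\<bar>) < (\<Sum>i\<in>UNIV - M. \<bar>(X *v g) $ i\<bar>)"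
    unfolding v_def by simp
qed

lemma INF_nonzero_attained_if_scale_invariant:
  fixes F :: "'a::euclidean_space \<Rightarrow> real"
  assumes "continuous_on (sphere 0 1) F"
    and "\<And>c g. c > 0 \<Longrightarrow> F (c *\<^sub>R g) = F g"
  obtains g0 where "g0 \<noteq> 0" "\<And>g. g \<noteq> 0 \<Longrightarrow> F g0 \<le> F g"
    and "(INF g \<in> {g. g \<noteq> 0}. F g) = F g0"
proof -
  obtain b :: 'a where "b \<in> Basis" using nonempty_Basis by blast
  then have "sphere (0::'a) 1 \<noteq> {}" by (metis mem_sphere_0 norm_Basis empty_iff)
  then obtain g0 where g0: "g0 \<in> sphere 0 1" "\<And>g. g \<in> sphere 0 1 \<Longrightarrow> F g0 \<le> F g"
    using continuous_attains_inf[OF compact_sphere _ assms(1)] by blast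
  have min: "F g0 \<le> F g" if "g \<noteq> 0" for g
  proof -
    have "F g0 \<le> F (inverse (norm g) *\<^sub>R g)" using g0(2) that by simp
    also have "\<dots> = F g" using assms(2) that by simp
    finally show ?thesis .
  qed
  have "g0 \<noteq> 0" using g0(1) by auto
  moreover have "(INF g \<in> {g. g \<noteq> 0}. F g) = F g0"
  proof (rule antisym)
    show "(INF g \<in> {g. g \<noteq> 0}. F g) \<le> F g0"
      using \<open>g0 \<noteq> 0\<close> min by (intro cINF_lower bdd_belowI[of _ "F g0"]) auto
    show "F g0 \<le> (INF g \<in> {g. g \<noteq> 0}. F g)"
      using \<open>g0 \<noteq> 0\<close> min by (intro cINF_greatest) auto
  qed
  ultimately show thesis using that min by blast
qed

lemma leverage_const_eq:
  fixes X :: "real^'p^'n"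
  shows "leverage_const X k = Min ((\<lambda>M. INF g \<in> {g. g \<noteq> 0}.
      (\<Sum>i\<in>UNIV - M. \<bar>(X *v g) $ i\<bar>) / l1norm (X *v g)) ` {M. card M = k})"
  unfolding leverage_const_def l1norm_def by (simp add: matrix_vector_mul_component)

lemma half_lt_INF_ratio_iff:
  fixes X :: "real^'p^'n"
  assumes "rank X = CARD('p)"
  shows "1/2 < (INF g \<in> {g. g \<noteq> 0}. (\<Sum>i\<in>UNIV - M. \<bar>(X *v g) $ i\<bar>) / l1norm (X *v g))
    \<longleftrightarrow> (\<forall>g. g \<noteq> 0 \<longrightarrow> (\<Sum>i\<in>M. \<bar>(X *v g) $ i\<bar>) < (\<Sum>i\<in>UNIV - M. \<bar>(X *v g) $ i\<bar>))"
    (is "_ < (INF g \<in> _. ?R g) \<longleftrightarrow> _")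
proof -
  have pos: "l1norm (X *v g) > 0" if "g \<noteq> 0" for g
  proof -
    have "inj ((*v) X)" using assms full_rank_injective by blast
    then have "X *v g \<noteq> 0" using that by (metis injD matrix_vector_mult_0_right)
    then show ?thesis by (rule l1norm_pos)
  qed
  have continuous: "continuous_on (sphere 0 1) ?R"
    using pos unfolding l1norm_def
    by (intro continuous_intros) (metis less_irrefl mem_sphere_0 norm_zero zero_neq_one)
  have scale_invariant: "?R (c *\<^sub>R g) = ?R g" if "c > 0" for c g
    using that by (simp add: l1norm_def matrix_vector_mult_scaleR abs_mult
        sum_distrib_left[symmetric])
  obtain g0 where g0: "g0 \<noteq> 0" "\<And>g. g \<noteq> 0 \<Longrightarrow> ?R g0 \<le> ?R g"
      and INF_eq: "(INF g \<in> {g. g \<noteq> 0}. ?R g) = ?R g0"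
    using INF_nonzero_attained_if_scale_invariant[OF continuous scale_invariant] by blast
  have "1/2 < (INF g \<in> {g. g \<noteq> 0}. ?R g) \<longleftrightarrow> (\<forall>g. g \<noteq> 0 \<longrightarrow> 1/2 < ?R g)"
    unfolding INF_eq using g0 by (meson order_less_le_trans)
  moreover have "1/2 < ?R g \<longleftrightarrow>
      (\<Sum>i\<in>M. \<bar>(X *v g) $ i\<bar>) < (\<Sum>i\<in>UNIV - M. \<bar>(X *v g) $ i\<bar>)" if "g \<noteq> 0" for g
    using pos[OF that] l1norm_split[of "X *v g" M] by (simp add: field_simps)
  ultimately show ?thesis by blast
qed

lemma half_lt_leverage_const_iff:
  fixes X :: "real^'p^'n"
  assumes "rank X = CARD('p)" "k \<le> CARD('n)"
  shows "1/2 < leverage_const X k \<longleftrightarrow> range_space_property X k"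
proof -
  have "{M :: 'n set. card M = k} \<noteq> {}"
    using obtain_subset_with_card_n[of k "UNIV :: 'n set"] assms(2) by auto
  then have "1/2 < leverage_const X k \<longleftrightarrow> (\<forall>M. card M = k \<longrightarrow>
      1/2 < (INF g \<in> {g. g \<noteq> 0}. (\<Sum>i\<in>UNIV - M. \<bar>(X *v g) $ i\<bar>) / l1norm (X *v g)))"
    unfolding leverage_const_eq by (subst Min_gr_iff) auto
  also have "\<dots> \<longleftrightarrow> range_space_property X k"
    unfolding range_space_property_def half_lt_INF_ratio_iff[OF assms(1)] by blast
  finally show ?thesis .
qed

lemma le_mX_iff:
  fixes X :: "real^'p^'n"
  assumes "rank X = CARD('p)" "1 \<le> k" "k \<le> CARD('n)"
  shows "k \<le> mX X \<longleftrightarrow> range_space_property X k"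
proof -
  define S where "S = {k. 1 \<le> k \<and> k \<le> CARD('n) \<and> leverage_const X k > 1/2}"
  have "finite S" unfolding S_def by (rule finite_subset[of _ "{..CARD('n)}"]) auto
  have mX_eq: "mX X = (if S = {} then 0 else Max S)" unfolding mX_def S_def Let_def by simp
  show ?thesis
  proof
    assume "k \<le> mX X"
    then have "S \<noteq> {}" "k \<le> Max S" using mX_eq assms(2) by (auto split: if_splits)
    then have "Max S \<in> S" using \<open>finite S\<close> by simp
    then have "range_space_property X (Max S)" "Max S \<le> CARD('n)"
      using half_lt_leverage_const_iff[OF assms(1)] unfolding S_def by auto
    then show "range_space_property X k"
      using range_space_property_mono \<open>k \<le> Max S\<close> by blast
  next
    assume "range_space_property X k"
    then have "k \<in> S"
      unfolding S_def using half_lt_leverage_const_iff[OF assms(1,3)] assms by simp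
    then show "k \<le> mX X" using \<open>finite S\<close> mX_eq by auto
  qed
qed

theorem theorem3p6:
  fixes X :: "real^'p^'n" and f :: "real^'p" and k :: nat
  assumes "CARD('p) < CARD('n)"
    and "rank X = CARD('p)"
    and "1 \<le> k" and "k \<le> CARD('n)"
  shows "(\<forall>e :: real^'n. l0norm e \<le> k \<longrightarrow>
            {g. \<forall>h. l1norm (X *v f + e - X *v g) \<le> l1norm (X *v f + e - X *v h)} = {f})
         \<longleftrightarrow> k \<le> mX X"
proof -
  have "(\<forall>e :: real^'n. l0norm e \<le> k \<longrightarrow> l1_minimizers X (X *v f + e) = {f})
      \<longleftrightarrow> range_space_property X k"
    using l1_minimizers_eq_if_range_space_property[OF _ assms(4)]
      range_space_property_if_l1_minimizers_eq[of k X f] by blast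
  also have "\<dots> \<longleftrightarrow> k \<le> mX X"
    using le_mX_iff[OF assms(2-4)] by simp
  finally show ?thesis unfolding l1_minimizers_def .
qed

end
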